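(* Let $(\mathcal A;\mathcal E)$ be an exact category with exact coproducts and let $\mathcal I$ be a left closed ideal. If $a^j\in\mathcal I$ for all $j$ in a set $J$, then the coproduct morphism $\amalg_j a^j:\amalg_j A^j_0\to\amalg_j A^j_1$ belongs to $\mathcal I$.
   Context: An exact category $(\mathcal A;\mathcal E)$ is an additive category with a class of conflations satisfying the Quillen–Keller axioms; it has exact coproducts if set-indexed coproducts exist and coproducts of conflations are conflations. $\mathrm{Ext}(A,B)$ is the group of conflations $B\to C\to A$. For $a:A_0\to A_1$, $b:B_0\to B_1$, $\mathrm{Ext}(a,b):\mathrm{Ext}(A_1,B_0)\to\mathrm{Ext}(A_0,B_1)$ is pushout along $b$ followed by pullback along $a$. For a class $\mathcal M$ of morphisms, ${}^\perp\mathcal M$ is the ideal of morphisms $a$ with $\mathrm{Ext}(a,m)=0$ for all $m\in\mathcal M$. An ideal is left closed if it is of the form ${}^\perp\mathcal M$ for some class $\mathcal M$ of morphisms. *)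

theory Defs
  imports Main
begin

text \<open>A category with additive structure on hom-sets, given as a record:
  objects, arrows, domain, codomain, composition (Cmp g f = g after f),
  identities, addition of parallel arrows and zero arrows.\<close>

record ('o, 'm) cat =
  Obj :: "'o set"
  Arr :: "'m set"
  Dom :: "'m \<Rightarrow> 'o"
  Cod :: "'m \<Rightarrow> 'o"
  Cmp :: "'m \<Rightarrow> 'm \<Rightarrow> 'm"
  Idt :: "'o \<Rightarrow> 'm"
  Add :: "'m \<Rightarrow> 'm \<Rightarrow> 'm"
  Zer :: "'o \<Rightarrow> 'o \<Rightarrow> 'm"

definition hom :: "('o, 'm) cat \<Rightarrow> 'o \<Rightarrow> 'o \<Rightarrow> 'm set" where
  "hom C A B = {f \<in> Arr C. Dom C f = A \<and> Cod C f = B}"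

definition category :: "('o, 'm) cat \<Rightarrow> bool" where
  "category C \<longleftrightarrow>
     (\<forall>f\<in>Arr C. Dom C f \<in> Obj C \<and> Cod C f \<in> Obj C) \<and>
     (\<forall>A\<in>Obj C. Idt C A \<in> hom C A A) \<and>
     (\<forall>f\<in>Arr C. \<forall>g\<in>Arr C. Cod C f = Dom C g \<longrightarrow> Cmp C g f \<in> hom C (Dom C f) (Cod C g)) \<and>
     (\<forall>f\<in>Arr C. \<forall>g\<in>Arr C. \<forall>h\<in>Arr C. Cod C f = Dom C g \<longrightarrow> Cod C g = Dom C h \<longrightarrow>
        Cmp C h (Cmp C g f) = Cmp C (Cmp C h g) f) \<and>
     (\<forall>f\<in>Arr C. Cmp C f (Idt C (Dom C f)) = f \<and> Cmp C (Idt C (Cod C f)) f = f)"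

definition preadditive :: "('o, 'm) cat \<Rightarrow> bool" where
  "preadditive C \<longleftrightarrow>
     (\<forall>A\<in>Obj C. \<forall>B\<in>Obj C.
        Zer C A B \<in> hom C A B \<and>
        (\<forall>f\<in>hom C A B. \<forall>g\<in>hom C A B. Add C f g \<in> hom C A B \<and> Add C f g = Add C g f) \<and>
        (\<forall>f\<in>hom C A B. \<forall>g\<in>hom C A B. \<forall>h\<in>hom C A B.
            Add C (Add C f g) h = Add C f (Add C g h)) \<and>
        (\<forall>f\<in>hom C A B. Add C f (Zer C A B) = f) \<and>
        (\<forall>f\<in>hom C A B. \<exists>g\<in>hom C A B. Add C f g = Zer C A B)) \<and>
     (\<forall>A\<in>Obj C. \<forall>B\<in>Obj C. \<forall>D\<in>Obj C.
        \<forall>f\<in>hom C A B. \<forall>f'\<in>hom C A B. \<forall>g\<in>hom C B D. \<forall>g'\<in>hom C B D.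
          Cmp C g (Add C f f') = Add C (Cmp C g f) (Cmp C g f') \<and>
          Cmp C (Add C g g') f = Add C (Cmp C g f) (Cmp C g' f))"

definition zero_object :: "('o, 'm) cat \<Rightarrow> 'o \<Rightarrow> bool" where
  "zero_object C Z \<longleftrightarrow> Z \<in> Obj C \<and>
     (\<forall>X\<in>Obj C. (\<exists>!f. f \<in> hom C Z X) \<and> (\<exists>!f. f \<in> hom C X Z))"

definition biproduct :: "('o, 'm) cat \<Rightarrow> 'o \<Rightarrow> 'o \<Rightarrow> 'o \<Rightarrow> 'm \<Rightarrow> 'm \<Rightarrow> 'm \<Rightarrow> 'm \<Rightarrow> bool" where
  "biproduct C A B S i1 i2 p1 p2 \<longleftrightarrow> S \<in> Obj C \<and>
     i1 \<in> hom C A S \<and> i2 \<in> hom C B S \<and> p1 \<in> hom C S A \<and> p2 \<in> hom C S B \<and>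
     Cmp C p1 i1 = Idt C A \<and> Cmp C p2 i2 = Idt C B \<and>
     Cmp C p2 i1 = Zer C A B \<and> Cmp C p1 i2 = Zer C B A \<and>
     Add C (Cmp C i1 p1) (Cmp C i2 p2) = Idt C S"

definition additive :: "('o, 'm) cat \<Rightarrow> bool" where
  "additive C \<longleftrightarrow> category C \<and> preadditive C \<and> (\<exists>Z. zero_object C Z) \<and>
     (\<forall>A\<in>Obj C. \<forall>B\<in>Obj C. \<exists>S i1 i2 p1 p2. biproduct C A B S i1 i2 p1 p2)"

definition iso :: "('o, 'm) cat \<Rightarrow> 'm \<Rightarrow> bool" where
  "iso C f \<longleftrightarrow> f \<in> Arr C \<and> (\<exists>g\<in>hom C (Cod C f) (Dom C f).
      Cmp C g f = Idt C (Dom C f) \<and> Cmp C f g = Idt C (Cod C f))"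

definition is_kernel :: "('o, 'm) cat \<Rightarrow> 'm \<Rightarrow> 'm \<Rightarrow> bool" where
  "is_kernel C i p \<longleftrightarrow> i \<in> Arr C \<and> p \<in> Arr C \<and> Cod C i = Dom C p \<and>
     Cmp C p i = Zer C (Dom C i) (Cod C p) \<and>
     (\<forall>X\<in>Obj C. \<forall>f\<in>hom C X (Dom C p). Cmp C p f = Zer C X (Cod C p) \<longrightarrow>
        (\<exists>!g. g \<in> hom C X (Dom C i) \<and> Cmp C i g = f))"

definition is_cokernel :: "('o, 'm) cat \<Rightarrow> 'm \<Rightarrow> 'm \<Rightarrow> bool" where
  "is_cokernel C p i \<longleftrightarrow> i \<in> Arr C \<and> p \<in> Arr C \<and> Cod C i = Dom C p \<and>
     Cmp C p i = Zer C (Dom C i) (Cod C p) \<and>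
     (\<forall>X\<in>Obj C. \<forall>f\<in>hom C (Cod C i) X. Cmp C f i = Zer C (Dom C i) X \<longrightarrow>
        (\<exists>!g. g \<in> hom C (Cod C p) X \<and> Cmp C g p = f))"

definition kernel_cokernel_pair :: "('o, 'm) cat \<Rightarrow> 'm \<Rightarrow> 'm \<Rightarrow> bool" where
  "kernel_cokernel_pair C i p \<longleftrightarrow> is_kernel C i p \<and> is_cokernel C p i"

definition is_pushout :: "('o, 'm) cat \<Rightarrow> 'm \<Rightarrow> 'm \<Rightarrow> 'o \<Rightarrow> 'm \<Rightarrow> 'm \<Rightarrow> bool" where
  "is_pushout C i f D i' f' \<longleftrightarrow> i \<in> Arr C \<and> f \<in> Arr C \<and> Dom C i = Dom C f \<and> D \<in> Obj C \<and>
     i' \<in> hom C (Cod C f) D \<and> f' \<in> hom C (Cod C i) D \<and> Cmp C f' i = Cmp C i' f \<and>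
     (\<forall>X\<in>Obj C. \<forall>x\<in>hom C (Cod C f) X. \<forall>y\<in>hom C (Cod C i) X. Cmp C y i = Cmp C x f \<longrightarrow>
        (\<exists>!h. h \<in> hom C D X \<and> Cmp C h i' = x \<and> Cmp C h f' = y))"

definition is_pullback :: "('o, 'm) cat \<Rightarrow> 'm \<Rightarrow> 'm \<Rightarrow> 'o \<Rightarrow> 'm \<Rightarrow> 'm \<Rightarrow> bool" where
  "is_pullback C p f P p' f' \<longleftrightarrow> p \<in> Arr C \<and> f \<in> Arr C \<and> Cod C p = Cod C f \<and> P \<in> Obj C \<and>
     p' \<in> hom C P (Dom C f) \<and> f' \<in> hom C P (Dom C p) \<and> Cmp C p f' = Cmp C f p' \<and>
     (\<forall>X\<in>Obj C. \<forall>x\<in>hom C X (Dom C f). \<forall>y\<in>hom C X (Dom C p). Cmp C p y = Cmp C f x \<longrightarrow>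
        (\<exists>!h. h \<in> hom C X P \<and> Cmp C p' h = x \<and> Cmp C f' h = y))"

text \<open>Conflations are pairs (i, p) (inflation i, deflation p).\<close>

definition adm_mono :: "('m \<times> 'm) set \<Rightarrow> 'm \<Rightarrow> bool" where
  "adm_mono E i \<longleftrightarrow> (\<exists>p. (i, p) \<in> E)"

definition adm_epi :: "('m \<times> 'm) set \<Rightarrow> 'm \<Rightarrow> bool" where
  "adm_epi E p \<longleftrightarrow> (\<exists>i. (i, p) \<in> E)"

definition exact_structure :: "('o, 'm) cat \<Rightarrow> ('m \<times> 'm) set \<Rightarrow> bool" where
  "exact_structure C E \<longleftrightarrow>
     (\<forall>(i, p)\<in>E. kernel_cokernel_pair C i p) \<and>
     \<comment> \<open>closed under isomorphisms of kernel-cokernel pairs\<close>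
     (\<forall>(i, p)\<in>E. \<forall>i' p' u v w. kernel_cokernel_pair C i' p' \<and>
        iso C u \<and> iso C v \<and> iso C w \<and>
        u \<in> hom C (Dom C i) (Dom C i') \<and> v \<in> hom C (Cod C i) (Cod C i') \<and>
        w \<in> hom C (Cod C p) (Cod C p') \<and>
        Cmp C v i = Cmp C i' u \<and> Cmp C w p = Cmp C p' v \<longrightarrow> (i', p') \<in> E) \<and>
     \<comment> \<open>E0, E0op\<close>
     (\<forall>A\<in>Obj C. adm_mono E (Idt C A) \<and> adm_epi E (Idt C A)) \<and>
     \<comment> \<open>E1, E1op\<close>
     (\<forall>i i'. adm_mono E i \<and> adm_mono E i' \<and> Cod C i = Dom C i' \<longrightarrow> adm_mono E (Cmp C i' i)) \<and>
     (\<forall>p p'. adm_epi E p \<and> adm_epi E p' \<and> Cod C p = Dom C p' \<longrightarrow> adm_epi E (Cmp C p' p)) \<and>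
     \<comment> \<open>E2: pushouts of inflations exist and are inflations\<close>
     (\<forall>i f. adm_mono E i \<and> f \<in> Arr C \<and> Dom C f = Dom C i \<longrightarrow>
        (\<exists>D i' f'. is_pushout C i f D i' f' \<and> adm_mono E i')) \<and>
     \<comment> \<open>E2op: pullbacks of deflations exist and are deflations\<close>
     (\<forall>p f. adm_epi E p \<and> f \<in> Arr C \<and> Cod C f = Cod C p \<longrightarrow>
        (\<exists>P p' f'. is_pullback C p f P p' f' \<and> adm_epi E p'))"

definition exact_category :: "('o, 'm) cat \<Rightarrow> ('m \<times> 'm) set \<Rightarrow> bool" where
  "exact_category C E \<longleftrightarrow> additive C \<and> exact_structure C E"

definition is_coproduct :: "('o, 'm) cat \<Rightarrow> 'j set \<Rightarrow> ('j \<Rightarrow> 'o) \<Rightarrow> 'o \<Rightarrow> ('j \<Rightarrow> 'm) \<Rightarrow> bool" where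
  "is_coproduct C J A S \<iota> \<longleftrightarrow> S \<in> Obj C \<and> (\<forall>j\<in>J. \<iota> j \<in> hom C (A j) S) \<and>
     (\<forall>X\<in>Obj C. \<forall>f. (\<forall>j\<in>J. f j \<in> hom C (A j) X) \<longrightarrow>
        (\<exists>!h. h \<in> hom C S X \<and> (\<forall>j\<in>J. Cmp C h (\<iota> j) = f j)))"

text \<open>Exact coproducts, for families indexed by subsets of the type 'j:
  coproducts exist, and coproducts of conflations are conflations.\<close>
definition has_exact_coproducts ::
    "('o, 'm) cat \<Rightarrow> ('m \<times> 'm) set \<Rightarrow> 'j itself \<Rightarrow> bool" where
  "has_exact_coproducts C E (_ :: 'j itself) \<longleftrightarrow>
     (\<forall>(J :: 'j set) A. (\<forall>j\<in>J. A j \<in> Obj C) \<longrightarrow> (\<exists>S \<iota>. is_coproduct C J A S \<iota>)) \<and>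
     (\<forall>(J :: 'j set) B X A i p SB \<iota>B SX \<iota>X SA \<iota>A u v.
        (\<forall>j\<in>J. (i j, p j) \<in> E \<and> i j \<in> hom C (B j) (X j) \<and> p j \<in> hom C (X j) (A j)) \<and>
        is_coproduct C J B SB \<iota>B \<and> is_coproduct C J X SX \<iota>X \<and> is_coproduct C J A SA \<iota>A \<and>
        u \<in> hom C SB SX \<and> (\<forall>j\<in>J. Cmp C u (\<iota>B j) = Cmp C (\<iota>X j) (i j)) \<and>
        v \<in> hom C SX SA \<and> (\<forall>j\<in>J. Cmp C v (\<iota>X j) = Cmp C (\<iota>A j) (p j))
        \<longrightarrow> (u, v) \<in> E)"

text \<open>For a : A0 \<rightarrow> A1 and b : B0 \<rightarrow> B1, Ext(a,b) : Ext(A1,B0) \<rightarrow> Ext(A0,B1) is zero iff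
  for every conflation B0 \<rightarrow> C \<rightarrow> A1, pushing out along b and then pulling back along a
  yields a split conflation (i.e. the zero element of Ext(A0,B1)).\<close>
definition Ext_zero :: "('o, 'm) cat \<Rightarrow> ('m \<times> 'm) set \<Rightarrow> 'm \<Rightarrow> 'm \<Rightarrow> bool" where
  "Ext_zero C E a b \<longleftrightarrow>
     (\<forall>i p. (i, p) \<in> E \<and> Dom C i = Dom C b \<and> Cod C p = Cod C a \<longrightarrow>
        (\<exists>D i' b' p' P p'' a' i''.
           is_pushout C i b D i' b' \<and>
           p' \<in> hom C D (Cod C a) \<and> Cmp C p' i' = Zer C (Cod C b) (Cod C a) \<and> Cmp C p' b' = p \<and>
           is_pullback C p' a P p'' a' \<and>
           i'' \<in> hom C (Cod C b) P \<and> Cmp C p'' i'' = Zer C (Cod C b) (Dom C a) \<and> Cmp C a' i'' = i' \<and>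
           (\<exists>s\<in>hom C (Dom C a) P. Cmp C p'' s = Idt C (Dom C a))))"

definition left_perp :: "('o, 'm) cat \<Rightarrow> ('m \<times> 'm) set \<Rightarrow> 'm set \<Rightarrow> 'm set" where
  "left_perp C E M = {a \<in> Arr C. \<forall>m\<in>M. Ext_zero C E a m}"

definition left_closed_ideal :: "('o, 'm) cat \<Rightarrow> ('m \<times> 'm) set \<Rightarrow> 'm set \<Rightarrow> bool" where
  "left_closed_ideal C E I \<longleftrightarrow> (\<exists>M \<subseteq> Arr C. I = left_perp C E M)"

end

theory Submission
  imports Defs
begin

(* Write I = \<perp>M and fix m \<in> M. Pushing a conflation ending in S1 = \<amalg> A1_j out along m and
   then pulling it back along u gives a split conflation as soon as u lifts through the pushed-out
   deflation. By the universal property of S0 = \<amalg> A0_j it suffices to lift each u \<iota>0_j = \<iota>1_j a_j.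
   Pulling the conflation back along \<iota>1_j first yields a conflation ending in A1_j, for which
   Ext(a_j, m) = 0 provides a lift of a_j through its own pushed-out deflation; the comparison map
   between the two pushouts along m carries this lift over. *)

locale preadditive_category =
  fixes C :: "('o, 'm) cat"
  assumes category: "category C" and preadditive: "preadditive C"
begin

lemma in_homD:
  assumes "f \<in> hom C A B"
  shows "f \<in> Arr C" "Dom C f = A" "Cod C f = B"
  using assms by (simp_all add: hom_def)

lemma in_hom_objs:
  assumes "f \<in> hom C A B"
  shows "A \<in> Obj C" "B \<in> Obj C"
  using assms category unfolding category_def hom_def by auto

lemma comp_in_hom: "f \<in> hom C A B \<Longrightarrow> g \<in> hom C B D \<Longrightarrow> Cmp C g f \<in> hom C A D"
  using category unfolding category_def hom_def by auto

lemma comp_assoc: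
  "f \<in> hom C A B \<Longrightarrow> g \<in> hom C B D \<Longrightarrow> h \<in> hom C D F \<Longrightarrow>
   Cmp C h (Cmp C g f) = Cmp C (Cmp C h g) f"
  using category unfolding category_def hom_def by auto

lemma id_in_hom: "A \<in> Obj C \<Longrightarrow> Idt C A \<in> hom C A A"
  using category unfolding category_def by auto

lemma comp_id_left: "f \<in> hom C A B \<Longrightarrow> Cmp C (Idt C B) f = f"
  using category unfolding category_def hom_def by auto

lemma comp_id_right: "f \<in> hom C A B \<Longrightarrow> Cmp C f (Idt C A) = f"
  using category unfolding category_def hom_def by auto

lemma iso_id: "A \<in> Obj C \<Longrightarrow> iso C (Idt C A)"
  unfolding iso_def by (metis comp_id_left id_in_hom in_homD)

lemma zero_in_hom: "A \<in> Obj C \<Longrightarrow> B \<in> Obj C \<Longrightarrow> Zer C A B \<in> hom C A B"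
  using preadditive unfolding preadditive_def by auto

lemma add_assoc:
  "f \<in> hom C A B \<Longrightarrow> g \<in> hom C A B \<Longrightarrow> h \<in> hom C A B \<Longrightarrow>
   Add C (Add C f g) h = Add C f (Add C g h)"
  using preadditive in_hom_objs unfolding preadditive_def by metis

lemma add_zero: "f \<in> hom C A B \<Longrightarrow> Add C f (Zer C A B) = f"
  using preadditive in_hom_objs unfolding preadditive_def by metis

lemma add_inverse: "f \<in> hom C A B \<Longrightarrow> \<exists>g\<in>hom C A B. Add C f g = Zer C A B"
  using preadditive in_hom_objs unfolding preadditive_def by metis

lemma comp_add_right:
  "f \<in> hom C A B \<Longrightarrow> f' \<in> hom C A B \<Longrightarrow> g \<in> hom C B D \<Longrightarrow>
   Cmp C g (Add C f f') = Add C (Cmp C g f) (Cmp C g f')"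
  using preadditive in_hom_objs unfolding preadditive_def by metis

lemma comp_add_left:
  "f \<in> hom C A B \<Longrightarrow> g \<in> hom C B D \<Longrightarrow> g' \<in> hom C B D \<Longrightarrow>
   Cmp C (Add C g g') f = Add C (Cmp C g f) (Cmp C g' f)"
  using preadditive in_hom_objs unfolding preadditive_def by metis

lemma add_idem_eq_zero:
  assumes x: "x \<in> hom C A B" and "Add C x x = x"
  shows "x = Zer C A B"
proof -
  obtain y where y: "y \<in> hom C A B" "Add C x y = Zer C A B"
    using add_inverse[OF x] by blast
  have "Add C x (Zer C A B) = Add C (Add C x x) y"
    using add_assoc[OF x x y(1)] y(2) by simp
  then show ?thesis
    using assms y add_zero[OF x] by simp
qed

lemma comp_zero_right:
  assumes g: "g \<in> hom C B D" and A: "A \<in> Obj C"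
  shows "Cmp C g (Zer C A B) = Zer C A D"
proof (rule add_idem_eq_zero)
  have z: "Zer C A B \<in> hom C A B"
    using zero_in_hom A in_hom_objs(1)[OF g] by blast
  show "Cmp C g (Zer C A B) \<in> hom C A D"
    using comp_in_hom[OF z g] .
  show "Add C (Cmp C g (Zer C A B)) (Cmp C g (Zer C A B)) = Cmp C g (Zer C A B)"
    using comp_add_right[OF z z g] add_zero[OF z] by simp
qed

lemma comp_zero_left:
  assumes f: "f \<in> hom C A B" and D: "D \<in> Obj C"
  shows "Cmp C (Zer C B D) f = Zer C A D"
proof (rule add_idem_eq_zero)
  have z: "Zer C B D \<in> hom C B D"
    using zero_in_hom D in_hom_objs(2)[OF f] by blast
  show "Cmp C (Zer C B D) f \<in> hom C A D"
    using comp_in_hom[OF f z] .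
  show "Add C (Cmp C (Zer C B D) f) (Cmp C (Zer C B D) f) = Cmp C (Zer C B D) f"
    using comp_add_left[OF f z z] add_zero[OF z] by simp
qed

section \<open>Universal properties\<close>

lemma kernel_cancel:
  assumes ker: "is_kernel C i p" and h: "h \<in> hom C W (Dom C i)" "h' \<in> hom C W (Dom C i)"
    and eq: "Cmp C i h = Cmp C i h'"
  shows "h = h'"
proof -
  have i: "i \<in> hom C (Dom C i) (Dom C p)" and p: "p \<in> hom C (Dom C p) (Cod C p)"
    and pi: "Cmp C p i = Zer C (Dom C i) (Cod C p)"
    using ker unfolding is_kernel_def hom_def by auto
  have "Cmp C p (Cmp C i h) = Zer C W (Cod C p)"
    using comp_assoc[OF h(1) i p] pi comp_zero_left[OF h(1) in_hom_objs(2)[OF p]] by simp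
  then have "\<exists>!g. g \<in> hom C W (Dom C i) \<and> Cmp C i g = Cmp C i h"
    using ker comp_in_hom[OF h(1) i] in_hom_objs(1)[OF h(1)] unfolding is_kernel_def by blast
  then show ?thesis
    using h eq by metis
qed

lemma kernel_lift:
  assumes "is_kernel C i p" "f \<in> hom C W (Dom C p)" "Cmp C p f = Zer C W (Cod C p)"
  shows "\<exists>g\<in>hom C W (Dom C i). Cmp C i g = f"
  using assms in_hom_objs(1)[OF assms(2)] unfolding is_kernel_def by blast

lemma cokernel_cancel:
  assumes cok: "is_cokernel C p i" and h: "h \<in> hom C (Cod C p) W" "h' \<in> hom C (Cod C p) W"
    and eq: "Cmp C h p = Cmp C h' p"
  shows "h = h'"
proof -
  have i: "i \<in> hom C (Dom C i) (Cod C i)" and p: "p \<in> hom C (Cod C i) (Cod C p)"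
    and pi: "Cmp C p i = Zer C (Dom C i) (Cod C p)"
    using cok unfolding is_cokernel_def hom_def by auto
  have "Cmp C (Cmp C h p) i = Zer C (Dom C i) W"
    using comp_assoc[OF i p h(1)] pi comp_zero_right[OF h(1) in_hom_objs(1)[OF i]] by simp
  then have "\<exists>!g. g \<in> hom C (Cod C p) W \<and> Cmp C g p = Cmp C h p"
    using cok comp_in_hom[OF p h(1)] in_hom_objs(2)[OF h(1)] unfolding is_cokernel_def by blast
  then show ?thesis
    using h eq by metis
qed

lemma cokernel_desc:
  assumes "is_cokernel C p i" "f \<in> hom C (Cod C i) W" "Cmp C f i = Zer C (Dom C i) W"
  shows "\<exists>g\<in>hom C (Cod C p) W. Cmp C g p = f"
  using assms in_hom_objs(2)[OF assms(2)] unfolding is_cokernel_def by blast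

lemma pushout_cancel:
  assumes po: "is_pushout C i f D i' f'" and h: "h \<in> hom C D W" "h' \<in> hom C D W"
    and eq: "Cmp C h i' = Cmp C h' i'" "Cmp C h f' = Cmp C h' f'"
  shows "h = h'"
proof -
  have i: "i \<in> hom C (Dom C i) (Cod C i)" and f: "f \<in> hom C (Dom C i) (Cod C f)"
    and i': "i' \<in> hom C (Cod C f) D" and f': "f' \<in> hom C (Cod C i) D"
    and sq: "Cmp C f' i = Cmp C i' f"
    using po unfolding is_pushout_def hom_def by auto
  have "Cmp C (Cmp C h f') i = Cmp C (Cmp C h i') f"
    using comp_assoc[OF i f' h(1)] comp_assoc[OF f i' h(1)] sq by simp
  then have "\<exists>!k. k \<in> hom C D W \<and> Cmp C k i' = Cmp C h i' \<and> Cmp C k f' = Cmp C h f'"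
    using po comp_in_hom[OF i' h(1)] comp_in_hom[OF f' h(1)] in_hom_objs(2)[OF h(1)]
    unfolding is_pushout_def by blast
  then show ?thesis
    using h eq by metis
qed

lemma pushout_desc:
  assumes "is_pushout C i f D i' f'" "x \<in> hom C (Cod C f) W" "y \<in> hom C (Cod C i) W"
    "Cmp C y i = Cmp C x f"
  shows "\<exists>h\<in>hom C D W. Cmp C h i' = x \<and> Cmp C h f' = y"
  using assms in_hom_objs(2)[OF assms(2)] unfolding is_pushout_def by blast

lemma pullback_cancel:
  assumes pb: "is_pullback C p f P p' f'" and h: "h \<in> hom C W P" "h' \<in> hom C W P"
    and eq: "Cmp C p' h = Cmp C p' h'" "Cmp C f' h = Cmp C f' h'"
  shows "h = h'"
proof -
  have p: "p \<in> hom C (Dom C p) (Cod C p)" and f: "f \<in> hom C (Dom C f) (Cod C p)"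
    and p': "p' \<in> hom C P (Dom C f)" and f': "f' \<in> hom C P (Dom C p)"
    and sq: "Cmp C p f' = Cmp C f p'"
    using pb unfolding is_pullback_def hom_def by auto
  have "Cmp C p (Cmp C f' h) = Cmp C f (Cmp C p' h)"
    using comp_assoc[OF h(1) f' p] comp_assoc[OF h(1) p' f] sq by simp
  then have "\<exists>!k. k \<in> hom C W P \<and> Cmp C p' k = Cmp C p' h \<and> Cmp C f' k = Cmp C f' h"
    using pb comp_in_hom[OF h(1) p'] comp_in_hom[OF h(1) f'] in_hom_objs(1)[OF h(1)]
    unfolding is_pullback_def by blast
  then show ?thesis
    using h eq by metis
qed

lemma pullback_lift:
  assumes "is_pullback C p f P p' f'" "x \<in> hom C W (Dom C f)" "y \<in> hom C W (Dom C p)"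
    "Cmp C p y = Cmp C f x"
  shows "\<exists>h\<in>hom C W P. Cmp C p' h = x \<and> Cmp C f' h = y"
  using assms in_hom_objs(1)[OF assms(2)] unfolding is_pullback_def by blast

lemma kernel_unique_up_to_iso:
  assumes k: "is_kernel C k p" and i: "is_kernel C i p"
  shows "\<exists>\<phi>\<in>hom C (Dom C k) (Dom C i). iso C \<phi> \<and> Cmp C i \<phi> = k"
proof -
  have k_hom: "k \<in> hom C (Dom C k) (Dom C p)" and i_hom: "i \<in> hom C (Dom C i) (Dom C p)"
    using k i unfolding is_kernel_def hom_def by auto
  obtain \<phi> where \<phi>: "\<phi> \<in> hom C (Dom C k) (Dom C i)" "Cmp C i \<phi> = k"
    using kernel_lift[OF i k_hom] k unfolding is_kernel_def by auto
  obtain \<psi> where \<psi>: "\<psi> \<in> hom C (Dom C i) (Dom C k)" "Cmp C k \<psi> = i"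
    using kernel_lift[OF k i_hom] i unfolding is_kernel_def by auto
  have "Cmp C k (Cmp C \<psi> \<phi>) = Cmp C k (Idt C (Dom C k))"
    using comp_assoc[OF \<phi>(1) \<psi>(1) k_hom] \<phi>(2) \<psi>(2) comp_id_right[OF k_hom] by simp
  then have "Cmp C \<psi> \<phi> = Idt C (Dom C k)"
    using kernel_cancel[OF k] comp_in_hom[OF \<phi>(1) \<psi>(1)] id_in_hom in_hom_objs(1)[OF k_hom]
    by blast
  moreover have "Cmp C i (Cmp C \<phi> \<psi>) = Cmp C i (Idt C (Dom C i))"
    using comp_assoc[OF \<psi>(1) \<phi>(1) i_hom] \<phi>(2) \<psi>(2) comp_id_right[OF i_hom] by simp
  then have "Cmp C \<phi> \<psi> = Idt C (Dom C i)"
    using kernel_cancel[OF i] comp_in_hom[OF \<psi>(1) \<phi>(1)] id_in_hom in_hom_objs(1)[OF i_hom]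
    by blast
  ultimately have "iso C \<phi>"
    using \<psi>(1) in_homD[OF \<phi>(1)] unfolding iso_def by auto
  then show ?thesis
    using \<phi> by blast
qed

lemma cokernel_unique_up_to_iso:
  assumes q: "is_cokernel C q i" and p: "is_cokernel C p i"
  shows "\<exists>w\<in>hom C (Cod C q) (Cod C p). iso C w \<and> Cmp C w q = p"
proof -
  have q_hom: "q \<in> hom C (Cod C i) (Cod C q)" and p_hom: "p \<in> hom C (Cod C i) (Cod C p)"
    using q p unfolding is_cokernel_def hom_def by auto
  obtain w where w: "w \<in> hom C (Cod C q) (Cod C p)" "Cmp C w q = p"
    using cokernel_desc[OF q p_hom] p unfolding is_cokernel_def by auto
  obtain w' where w': "w' \<in> hom C (Cod C p) (Cod C q)" "Cmp C w' p = q"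
    using cokernel_desc[OF p q_hom] q unfolding is_cokernel_def by auto
  have "Cmp C (Cmp C w' w) q = Cmp C (Idt C (Cod C q)) q"
    using comp_assoc[OF q_hom w(1) w'(1)] w(2) w'(2) comp_id_left[OF q_hom] by simp
  then have "Cmp C w' w = Idt C (Cod C q)"
    using cokernel_cancel[OF q] comp_in_hom[OF w(1) w'(1)] id_in_hom in_hom_objs(2)[OF q_hom]
    by blast
  moreover have "Cmp C (Cmp C w w') p = Cmp C (Idt C (Cod C p)) p"
    using comp_assoc[OF p_hom w'(1) w(1)] w(2) w'(2) comp_id_left[OF p_hom] by simp
  then have "Cmp C w w' = Idt C (Cod C p)"
    using cokernel_cancel[OF p] comp_in_hom[OF w'(1) w(1)] id_in_hom in_hom_objs(2)[OF p_hom]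
    by blast
  ultimately have "iso C w"
    using w'(1) in_homD[OF w(1)] unfolding iso_def by auto
  then show ?thesis
    using w by blast
qed

lemma cokernel_of_factor:
  assumes cok: "is_cokernel C p k" and \<phi>: "\<phi> \<in> hom C (Dom C k) (Dom C i)"
    and i: "i \<in> hom C (Dom C i) (Cod C k)" and i\<phi>: "Cmp C i \<phi> = k"
    and pi: "Cmp C p i = Zer C (Dom C i) (Cod C p)"
  shows "is_cokernel C p i"
proof -
  have "Cmp C f k = Zer C (Dom C k) X"
    if "f \<in> hom C (Cod C k) X" "Cmp C f i = Zer C (Dom C i) X" for X f
    using comp_assoc[OF \<phi> i that(1)] i\<phi> that(2) comp_zero_left[OF \<phi> in_hom_objs(2)[OF that(1)]]
    by simp
  then show ?thesis
    using cok i pi in_homD[OF i] unfolding is_cokernel_def by auto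
qed

lemma kernel_of_factor:
  assumes ker: "is_kernel C i q" and w: "w \<in> hom C (Cod C p) (Cod C q)"
    and p: "p \<in> hom C (Dom C q) (Cod C p)" and wp: "Cmp C w p = q"
    and pi: "Cmp C p i = Zer C (Dom C i) (Cod C p)"
  shows "is_kernel C i p"
proof -
  have "Cmp C q f = Zer C X (Cod C q)"
    if "f \<in> hom C X (Dom C q)" "Cmp C p f = Zer C X (Cod C p)" for X f
    using comp_assoc[OF that(1) p w] wp that(2) comp_zero_right[OF w in_hom_objs(1)[OF that(1)]]
    by simp
  then show ?thesis
    using ker p pi in_homD[OF p] unfolding is_kernel_def by auto
qed

lemma pushout_cokernel:
  assumes po: "is_pushout C i m D i' b'" and cok: "is_cokernel C p i"
    and p': "p' \<in> hom C D (Cod C p)" and p'i': "Cmp C p' i' = Zer C (Cod C m) (Cod C p)"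
    and p'b': "Cmp C p' b' = p"
  shows "is_cokernel C p' i'"
proof -
  have i: "i \<in> hom C (Dom C m) (Cod C i)" and m: "m \<in> hom C (Dom C m) (Cod C m)"
    and i': "i' \<in> hom C (Cod C m) D" and b': "b' \<in> hom C (Cod C i) D"
    and sq: "Cmp C b' i = Cmp C i' m"
    using po unfolding is_pushout_def hom_def by auto
  have p: "p \<in> hom C (Cod C i) (Cod C p)"
    using cok unfolding is_cokernel_def hom_def by auto
  have "\<exists>!g. g \<in> hom C (Cod C p) W \<and> Cmp C g p' = x"
    if x: "x \<in> hom C D W" and xi': "Cmp C x i' = Zer C (Cod C m) W" for W x
  proof -
    have "Cmp C (Cmp C x b') i = Zer C (Dom C m) W"
      using comp_assoc[OF i b' x] comp_assoc[OF m i' x] sq xi'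
        comp_zero_left[OF m in_hom_objs(2)[OF x]] by simp
    then obtain g where g: "g \<in> hom C (Cod C p) W" and gp: "Cmp C g p = Cmp C x b'"
      using cokernel_desc[OF cok comp_in_hom[OF b' x]] in_homD(2)[OF i] by auto
    show ?thesis
    proof (rule ex1I[of _ g])
      have "Cmp C (Cmp C g p') i' = Cmp C x i'"
        using comp_assoc[OF i' p' g] p'i' xi' comp_zero_right[OF g in_hom_objs(1)[OF i']] by simp
      moreover have "Cmp C (Cmp C g p') b' = Cmp C x b'"
        using comp_assoc[OF b' p' g] p'b' gp by simp
      ultimately show "g \<in> hom C (Cod C p) W \<and> Cmp C g p' = x"
        using pushout_cancel[OF po comp_in_hom[OF p' g] x] g by simp
    next
      fix g' assume g': "g' \<in> hom C (Cod C p) W \<and> Cmp C g' p' = x"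
      then have "Cmp C g' p = Cmp C g p"
        using comp_assoc[OF b' p'] p'b' gp by metis
      then show "g' = g"
        using cokernel_cancel[OF cok] g g' by blast
    qed
  qed
  moreover have "Dom C i' = Cod C m" "Cod C i' = D" "Dom C p' = D" "Cod C p' = Cod C p"
    using in_homD i' p' by auto
  ultimately show ?thesis
    using in_homD(1) i' p' p'i' unfolding is_cokernel_def by auto
qed

lemma pullback_kernel:
  assumes pb: "is_pullback C p f P q f'" and ker: "is_kernel C i p"
    and k: "k \<in> hom C (Dom C i) P" and qk: "Cmp C q k = Zer C (Dom C i) (Dom C f)"
    and f'k: "Cmp C f' k = i"
  shows "is_kernel C k q"
proof -
  have p: "p \<in> hom C (Dom C p) (Cod C p)" and f: "f \<in> hom C (Dom C f) (Cod C p)"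
    and q: "q \<in> hom C P (Dom C f)" and f': "f' \<in> hom C P (Dom C p)"
    and sq: "Cmp C p f' = Cmp C f q"
    using pb unfolding is_pullback_def hom_def by auto
  have i: "i \<in> hom C (Dom C i) (Dom C p)"
    using ker unfolding is_kernel_def hom_def by auto
  have "\<exists>!h. h \<in> hom C W (Dom C i) \<and> Cmp C k h = x"
    if x: "x \<in> hom C W P" and qx: "Cmp C q x = Zer C W (Dom C f)" for W x
  proof -
    have "Cmp C p (Cmp C f' x) = Zer C W (Cod C p)"
      using comp_assoc[OF x f' p] comp_assoc[OF x q f] sq qx
        comp_zero_right[OF f in_hom_objs(1)[OF x]] by simp
    then obtain h where h: "h \<in> hom C W (Dom C i)" and ih: "Cmp C i h = Cmp C f' x"
      using kernel_lift[OF ker comp_in_hom[OF x f']] by auto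
    show ?thesis
    proof (rule ex1I[of _ h])
      have "Cmp C q (Cmp C k h) = Cmp C q x"
        using comp_assoc[OF h k q] qk qx comp_zero_left[OF h in_hom_objs(2)[OF q]] by simp
      moreover have "Cmp C f' (Cmp C k h) = Cmp C f' x"
        using comp_assoc[OF h k f'] f'k ih by simp
      ultimately show "h \<in> hom C W (Dom C i) \<and> Cmp C k h = x"
        using pullback_cancel[OF pb comp_in_hom[OF h k] x] h by simp
    next
      fix h' assume h': "h' \<in> hom C W (Dom C i) \<and> Cmp C k h' = x"
      then have "Cmp C i h' = Cmp C i h"
        using comp_assoc[OF _ k f'] f'k ih by metis
      then show "h' = h"
        using kernel_cancel[OF ker] h h' by blast
    qed
  qed
  moreover have "Dom C k = Dom C i" "Cod C k = P" "Dom C q = P" "Cod C q = Dom C f"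
    using in_homD k q by auto
  ultimately show ?thesis
    using in_homD(1) k q qk unfolding is_kernel_def by auto
qed

lemma pushout_comparison:
  assumes pok: "is_pushout C k m Dk k' bk" and q': "q' \<in> hom C Dk T"
    "Cmp C q' k' = Zer C (Cod C m) T" "Cmp C q' bk = q"
    and po: "is_pushout C i m D i' b'" and p': "p' \<in> hom C D S"
    "Cmp C p' i' = Zer C (Cod C m) S" "Cmp C p' b' = p"
    and g: "g \<in> hom C (Cod C k) (Cod C i)" "Cmp C g k = i"
    and f: "f \<in> hom C T S" "Cmp C p g = Cmp C f q"
  shows "\<exists>d\<in>hom C Dk D. Cmp C p' d = Cmp C f q'"
proof -
  have k: "k \<in> hom C (Dom C m) (Cod C k)" and m: "m \<in> hom C (Dom C m) (Cod C m)"
    and k': "k' \<in> hom C (Cod C m) Dk" and bk: "bk \<in> hom C (Cod C k) Dk"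
    using pok unfolding is_pushout_def hom_def by auto
  have i': "i' \<in> hom C (Cod C m) D" and b': "b' \<in> hom C (Cod C i) D"
    and sq: "Cmp C b' i = Cmp C i' m"
    using po unfolding is_pushout_def by auto
  have "Cmp C (Cmp C b' g) k = Cmp C i' m"
    using comp_assoc[OF k g(1) b'] g(2) sq by simp
  then obtain d where d: "d \<in> hom C Dk D" "Cmp C d k' = i'" "Cmp C d bk = Cmp C b' g"
    using pushout_desc[OF pok i' comp_in_hom[OF g(1) b']] by blast
  have "Cmp C p' d = Cmp C f q'"
  proof (rule pushout_cancel[OF pok comp_in_hom[OF d(1) p'(1)] comp_in_hom[OF q'(1) f(1)]])
    show "Cmp C (Cmp C p' d) k' = Cmp C (Cmp C f q') k'"
      using comp_assoc[OF k' d(1) p'(1)] comp_assoc[OF k' q'(1) f(1)] d(2) p'(2) q'(2)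
        comp_zero_right[OF f(1) in_hom_objs(1)[OF k']] by simp
    show "Cmp C (Cmp C p' d) bk = Cmp C (Cmp C f q') bk"
      using comp_assoc[OF bk d(1) p'(1)] comp_assoc[OF bk q'(1) f(1)] comp_assoc[OF g(1) b' p'(1)]
        d(3) p'(3) q'(3) f(2) by simp
  qed
  then show ?thesis
    using d(1) by blast
qed

lemma coproduct_univ:
  assumes "is_coproduct C J A S \<iota>" "X \<in> Obj C" "\<forall>j\<in>J. f j \<in> hom C (A j) X"
  shows "\<exists>!h. h \<in> hom C S X \<and> (\<forall>j\<in>J. Cmp C h (\<iota> j) = f j)"
  using assms unfolding is_coproduct_def by blast

lemma coproduct_cancel:
  assumes cop: "is_coproduct C J A S \<iota>" and h: "h \<in> hom C S X" "h' \<in> hom C S X"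
    and eq: "\<forall>j\<in>J. Cmp C h (\<iota> j) = Cmp C h' (\<iota> j)"
  shows "h = h'"
proof -
  have "\<forall>j\<in>J. Cmp C h (\<iota> j) \<in> hom C (A j) X"
    using cop comp_in_hom h(1) unfolding is_coproduct_def by blast
  then have "\<exists>!k. k \<in> hom C S X \<and> (\<forall>j\<in>J. Cmp C k (\<iota> j) = Cmp C h (\<iota> j))"
    by (rule coproduct_univ[OF cop in_hom_objs(2)[OF h(1)]])
  then show ?thesis
    using h eq by (metis (no_types, lifting))
qed

lemma coproduct_lift:
  assumes cop: "is_coproduct C J A S \<iota>" and x: "x \<in> hom C P T" and u: "u \<in> hom C S T"
    and lifts: "\<forall>j\<in>J. \<exists>e\<in>hom C (A j) P. Cmp C x e = Cmp C u (\<iota> j)"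
  shows "\<exists>g\<in>hom C S P. Cmp C x g = u"
proof -
  obtain e where e: "\<forall>j\<in>J. e j \<in> hom C (A j) P \<and> Cmp C x (e j) = Cmp C u (\<iota> j)"
    using lifts by metis
  have \<iota>: "\<forall>j\<in>J. \<iota> j \<in> hom C (A j) S"
    using cop unfolding is_coproduct_def by auto
  obtain g where g: "g \<in> hom C S P" "\<forall>j\<in>J. Cmp C g (\<iota> j) = e j"
    using coproduct_univ[OF cop in_hom_objs(1)[OF x], of e] e by blast
  have "Cmp C (Cmp C x g) (\<iota> j) = Cmp C u (\<iota> j)" if j: "j \<in> J" for j
    using comp_assoc[OF _ g(1) x, of "\<iota> j" "A j"] \<iota> g(2) e j by simp
  then have "Cmp C x g = u"
    using coproduct_cancel[OF cop comp_in_hom[OF g(1) x] u] by blast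
  then show ?thesis
    using g(1) by blast
qed

end

section \<open>Conflations\<close>

locale exact_cat = preadditive_category C for C :: "('o, 'm) cat" +
  fixes E :: "('m \<times> 'm) set"
  assumes exact_structure: "exact_structure C E"
begin

lemma conflation_kernel: "(i, p) \<in> E \<Longrightarrow> is_kernel C i p"
  using exact_structure unfolding exact_structure_def kernel_cokernel_pair_def by blast

lemma conflation_cokernel: "(i, p) \<in> E \<Longrightarrow> is_cokernel C p i"
  using exact_structure unfolding exact_structure_def kernel_cokernel_pair_def by blast

lemma conflation_iso_closed:
  assumes "(i, p) \<in> E" "kernel_cokernel_pair C i' p'" "iso C u" "iso C v" "iso C w"
    "u \<in> hom C (Dom C i) (Dom C i')" "v \<in> hom C (Cod C i) (Cod C i')"
    "w \<in> hom C (Cod C p) (Cod C p')"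
    "Cmp C v i = Cmp C i' u" "Cmp C w p = Cmp C p' v"
  shows "(i', p') \<in> E"
  using exact_structure assms unfolding exact_structure_def by blast

lemma pushout_of_inflation:
  assumes "adm_mono E i" "f \<in> Arr C" "Dom C f = Dom C i"
  shows "\<exists>D i' f'. is_pushout C i f D i' f' \<and> adm_mono E i'"
  using exact_structure assms unfolding exact_structure_def by blast

lemma pullback_of_deflation:
  assumes "adm_epi E p" "f \<in> Arr C" "Cod C f = Cod C p"
  shows "\<exists>P p' f'. is_pullback C p f P p' f' \<and> adm_epi E p'"
  using exact_structure assms unfolding exact_structure_def by blast

lemma conflation_of_kernel:
  assumes kp: "(k, p) \<in> E" and ker: "is_kernel C i p"
  shows "(i, p) \<in> E"
proof -
  obtain \<phi> where \<phi>: "\<phi> \<in> hom C (Dom C k) (Dom C i)" "iso C \<phi>" "Cmp C i \<phi> = k"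
    using kernel_unique_up_to_iso[OF conflation_kernel[OF kp] ker] by blast
  have i: "i \<in> hom C (Dom C i) (Dom C p)" and p: "p \<in> hom C (Dom C p) (Cod C p)"
    and pi: "Cmp C p i = Zer C (Dom C i) (Cod C p)"
    using ker unfolding is_kernel_def hom_def by auto
  have "Cod C k = Dom C p"
    using conflation_kernel[OF kp] unfolding is_kernel_def by simp
  then have "is_cokernel C p i"
    using cokernel_of_factor[OF conflation_cokernel[OF kp] \<phi>(1)] i \<phi>(3) pi by simp
  then have "kernel_cokernel_pair C i p"
    using ker unfolding kernel_cokernel_pair_def by simp
  then show ?thesis
  proof (rule conflation_iso_closed[OF kp _ \<phi>(2) iso_id iso_id])
    show "Dom C p \<in> Obj C" "Cod C p \<in> Obj C"
      using in_hom_objs[OF p] by auto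
    show "Idt C (Dom C p) \<in> hom C (Cod C k) (Cod C i)"
      using id_in_hom in_hom_objs(1)[OF p] in_homD(3)[OF i] \<open>Cod C k = Dom C p\<close> by simp
    show "Idt C (Cod C p) \<in> hom C (Cod C p) (Cod C p)"
      using id_in_hom in_hom_objs(2)[OF p] by simp
    show "Cmp C (Idt C (Dom C p)) k = Cmp C i \<phi>"
      using \<phi>(3) comp_id_left comp_in_hom[OF \<phi>(1) i] by simp
    show "Cmp C (Idt C (Cod C p)) p = Cmp C p (Idt C (Dom C p))"
      using comp_id_left[OF p] comp_id_right[OF p] by simp
  qed (use \<phi>(1) in simp)
qed

lemma conflation_of_cokernel:
  assumes iq: "(i, q) \<in> E" and cok: "is_cokernel C p i"
  shows "(i, p) \<in> E"
proof -
  obtain w where w: "w \<in> hom C (Cod C q) (Cod C p)" "iso C w" "Cmp C w q = p"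
    using cokernel_unique_up_to_iso[OF conflation_cokernel[OF iq] cok] by blast
  have i: "i \<in> hom C (Dom C i) (Cod C i)" and p: "p \<in> hom C (Cod C i) (Cod C p)"
    and pi: "Cmp C p i = Zer C (Dom C i) (Cod C p)"
    using cok unfolding is_cokernel_def hom_def by auto
  have q: "q \<in> hom C (Cod C i) (Cod C q)"
    using conflation_kernel[OF iq] unfolding is_kernel_def hom_def by auto
  obtain w' where w': "w' \<in> hom C (Cod C p) (Cod C q)" "Cmp C w' p = q"
    using cokernel_desc[OF cok q] conflation_cokernel[OF iq] unfolding is_cokernel_def by auto
  have "is_kernel C i p"
    using kernel_of_factor[OF conflation_kernel[OF iq] w'(1)] p w'(2) pi in_homD(2)[OF q] by simp
  then have "kernel_cokernel_pair C i p"
    using cok unfolding kernel_cokernel_pair_def by simp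
  then show ?thesis
  proof (rule conflation_iso_closed[OF iq _ iso_id iso_id w(2)])
    show "Dom C i \<in> Obj C" "Cod C i \<in> Obj C"
      using in_hom_objs[OF i] by auto
    show "Idt C (Dom C i) \<in> hom C (Dom C i) (Dom C i)"
      "Idt C (Cod C i) \<in> hom C (Cod C i) (Cod C i)"
      using id_in_hom in_hom_objs[OF i] by auto
    show "Cmp C (Idt C (Cod C i)) i = Cmp C i (Idt C (Dom C i))"
      using comp_id_left[OF i] comp_id_right[OF i] by simp
    show "Cmp C w q = Cmp C p (Idt C (Cod C i))"
      using w(3) comp_id_right[OF p] by simp
  qed (use w(1) in simp)
qed

lemma pushout_conflation:
  assumes ip: "(i, p) \<in> E" and m: "m \<in> Arr C" "Dom C m = Dom C i"
  obtains D i' b' p' where "is_pushout C i m D i' b'" "(i', p') \<in> E"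
    "p' \<in> hom C D (Cod C p)" "Cmp C p' i' = Zer C (Cod C m) (Cod C p)" "Cmp C p' b' = p"
proof -
  have "adm_mono E i"
    using ip unfolding adm_mono_def by blast
  then obtain D i' b' where po: "is_pushout C i m D i' b'" and "adm_mono E i'"
    using pushout_of_inflation m by blast
  then obtain q where i'q: "(i', q) \<in> E"
    unfolding adm_mono_def by blast
  have m_hom: "m \<in> hom C (Dom C i) (Cod C m)" and i': "i' \<in> hom C (Cod C m) D"
    using m po unfolding is_pushout_def hom_def by auto
  have p: "p \<in> hom C (Cod C i) (Cod C p)" and pi: "Cmp C p i = Zer C (Dom C i) (Cod C p)"
    using conflation_kernel[OF ip] unfolding is_kernel_def hom_def by auto
  have "Cmp C p i = Cmp C (Zer C (Cod C m) (Cod C p)) m"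
    using pi comp_zero_left[OF m_hom in_hom_objs(2)[OF p]] by simp
  then obtain p' where p': "p' \<in> hom C D (Cod C p)"
    and p'i': "Cmp C p' i' = Zer C (Cod C m) (Cod C p)" and p'b': "Cmp C p' b' = p"
    using pushout_desc[OF po _ p] zero_in_hom in_hom_objs(2)[OF m_hom] in_hom_objs(2)[OF p]
    by blast
  have "is_cokernel C p' i'"
    using pushout_cokernel[OF po conflation_cokernel[OF ip] p' p'i' p'b'] .
  then have "(i', p') \<in> E"
    using conflation_of_cokernel[OF i'q] by blast
  then show ?thesis
    using that po p' p'i' p'b' by blast
qed

lemma pullback_conflation:
  assumes ip: "(i, p) \<in> E" and f: "f \<in> Arr C" "Cod C f = Cod C p"
  obtains Y q f' k where "is_pullback C p f Y q f'" "(k, q) \<in> E"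
    "k \<in> hom C (Dom C i) Y" "Cmp C f' k = i"
proof -
  have "adm_epi E p"
    using ip unfolding adm_epi_def by blast
  then obtain Y q f' where pb: "is_pullback C p f Y q f'" and "adm_epi E q"
    using pullback_of_deflation f by blast
  then obtain k0 where k0q: "(k0, q) \<in> E"
    unfolding adm_epi_def by blast
  have f_hom: "f \<in> hom C (Dom C f) (Cod C p)"
    using f unfolding hom_def by simp
  have i: "i \<in> hom C (Dom C i) (Dom C p)" and pi: "Cmp C p i = Zer C (Dom C i) (Cod C p)"
    using conflation_kernel[OF ip] unfolding is_kernel_def hom_def by auto
  have "Cmp C p i = Cmp C f (Zer C (Dom C i) (Dom C f))"
    using pi comp_zero_right[OF f_hom in_hom_objs(1)[OF i]] by simp
  then obtain k where k: "k \<in> hom C (Dom C i) Y"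
    and qk: "Cmp C q k = Zer C (Dom C i) (Dom C f)" and f'k: "Cmp C f' k = i"
    using pullback_lift[OF pb _ i] zero_in_hom in_hom_objs(1)[OF i] in_hom_objs(1)[OF f_hom]
    by blast
  have "is_kernel C k q"
    using pullback_kernel[OF pb conflation_kernel[OF ip] k qk f'k] .
  then have "(k, q) \<in> E"
    using conflation_of_kernel[OF k0q] by blast
  then show ?thesis
    using that pb k f'k by blast
qed

section \<open>Vanishing of Ext\<close>

lemma Ext_zero_lift:
  assumes ext: "Ext_zero C E a m" and a: "a \<in> Arr C"
    and kq: "(k, q) \<in> E" "Dom C k = Dom C m" "Cod C q = Cod C a"
  obtains D k' b q' g where "is_pushout C k m D k' b"
    "q' \<in> hom C D (Cod C a)" "Cmp C q' k' = Zer C (Cod C m) (Cod C a)" "Cmp C q' b = q"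
    "g \<in> hom C (Dom C a) D" "Cmp C q' g = a"
proof -
  obtain D k' b q' P q'' a' s where po: "is_pushout C k m D k' b"
    and q': "q' \<in> hom C D (Cod C a)" "Cmp C q' k' = Zer C (Cod C m) (Cod C a)" "Cmp C q' b = q"
    and pb: "is_pullback C q' a P q'' a'"
    and s: "s \<in> hom C (Dom C a) P" "Cmp C q'' s = Idt C (Dom C a)"
    using ext kq unfolding Ext_zero_def by blast
  have a_hom: "a \<in> hom C (Dom C a) (Cod C a)" and q'': "q'' \<in> hom C P (Dom C a)"
    and a': "a' \<in> hom C P D" and sq: "Cmp C q' a' = Cmp C a q''"
    using a pb in_homD(2)[OF q'(1)] unfolding is_pullback_def hom_def by auto
  have "Cmp C q' (Cmp C a' s) = Cmp C a (Cmp C q'' s)"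
    using comp_assoc[OF s(1) a' q'(1)] comp_assoc[OF s(1) q'' a_hom] sq by simp
  then have "Cmp C q' (Cmp C a' s) = a"
    using s(2) comp_id_right[OF a_hom] by simp
  then show ?thesis
    using that po q' comp_in_hom[OF s(1) a'] by blast
qed

lemma Ext_zero_lift_pushout:
  assumes ext: "Ext_zero C E a m" and a: "a \<in> hom C A0 A1" and m: "m \<in> Arr C"
    and ip: "(i, p) \<in> E" "Dom C i = Dom C m"
    and po: "is_pushout C i m D i' b'" and p': "p' \<in> hom C D (Cod C p)"
    "Cmp C p' i' = Zer C (Cod C m) (Cod C p)" "Cmp C p' b' = p"
    and f: "f \<in> hom C A1 (Cod C p)"
  shows "\<exists>g\<in>hom C A0 D. Cmp C p' g = Cmp C f a"
proof -
  obtain Y q f' k where pb: "is_pullback C p f Y q f'" and kq: "(k, q) \<in> E"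
    and k: "k \<in> hom C (Dom C i) Y" and f'k: "Cmp C f' k = i"
    using pullback_conflation[OF ip(1) in_homD(1,3)[OF f]] by blast
  have q: "q \<in> hom C Y A1" and f': "f' \<in> hom C (Cod C k) (Cod C i)"
    and sq: "Cmp C p f' = Cmp C f q"
    using pb in_homD(2)[OF f] in_homD(3)[OF k] conflation_kernel[OF ip(1)]
    unfolding is_pullback_def is_kernel_def by auto
  have "Dom C k = Dom C m" "Cod C q = Cod C a"
    using ip(2) in_homD(2)[OF k] in_homD(3)[OF q] in_homD(3)[OF a] by auto
  then obtain Dk k' bk q' g where pok: "is_pushout C k m Dk k' bk"
    and q': "q' \<in> hom C Dk A1" "Cmp C q' k' = Zer C (Cod C m) A1" "Cmp C q' bk = q"
    and g: "g \<in> hom C A0 Dk" "Cmp C q' g = a"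
    using Ext_zero_lift[OF ext in_homD(1)[OF a] kq] in_homD(2,3)[OF a] by metis
  obtain d where d: "d \<in> hom C Dk D" "Cmp C p' d = Cmp C f q'"
    using pushout_comparison[OF pok q' po p' f' f'k f sq] by blast
  have "Cmp C p' (Cmp C d g) = Cmp C f a"
    using comp_assoc[OF g(1) d(1) p'(1)] comp_assoc[OF g(1) q'(1) f] d(2) g(2) by simp
  then show ?thesis
    using comp_in_hom[OF g(1) d(1)] by blast
qed

lemma Ext_zero_if_lift:
  assumes u: "u \<in> hom C S0 S1" and m: "m \<in> Arr C"
    and lift: "\<And>i p D i' b' p'. (i, p) \<in> E \<Longrightarrow> Dom C i = Dom C m \<Longrightarrow> Cod C p = S1 \<Longrightarrow>
      is_pushout C i m D i' b' \<Longrightarrow> p' \<in> hom C D S1 \<Longrightarrow>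
      Cmp C p' i' = Zer C (Cod C m) S1 \<Longrightarrow> Cmp C p' b' = p \<Longrightarrow>
      \<exists>g\<in>hom C S0 D. Cmp C p' g = u"
  shows "Ext_zero C E u m"
  unfolding Ext_zero_def
proof (intro allI impI, elim conjE)
  fix i p assume ip: "(i, p) \<in> E" "Dom C i = Dom C m" "Cod C p = Cod C u"
  then have S1: "Cod C p = S1"
    using in_homD(3)[OF u] by simp
  obtain D i' b' p' where po: "is_pushout C i m D i' b'" and i'p': "(i', p') \<in> E"
    and p': "p' \<in> hom C D S1" "Cmp C p' i' = Zer C (Cod C m) S1" "Cmp C p' b' = p"
    using pushout_conflation[OF ip(1) m ip(2)[symmetric]] S1 by metis
  obtain g where g: "g \<in> hom C S0 D" "Cmp C p' g = u"
    using lift[OF ip(1,2) S1 po p'] by blast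
  have "adm_epi E p'"
    using i'p' unfolding adm_epi_def by blast
  then obtain P p'' a' where pb: "is_pullback C p' u P p'' a'"
    using pullback_of_deflation in_homD[OF u] in_homD(3)[OF p'(1)] by metis
  have i': "i' \<in> hom C (Cod C m) (Dom C p')" and g': "g \<in> hom C S0 (Dom C p')"
    using po g(1) in_homD(2)[OF p'(1)] unfolding is_pushout_def by auto
  have "Cmp C p' i' = Cmp C u (Zer C (Cod C m) S0)"
    using p'(2) comp_zero_right[OF u] in_hom_objs(1)[OF i'] by simp
  then obtain i'' where i'': "i'' \<in> hom C (Cod C m) P" "Cmp C p'' i'' = Zer C (Cod C m) S0"
    "Cmp C a' i'' = i'"
    using pullback_lift[OF pb _ i'] zero_in_hom in_hom_objs(1)[OF i'] in_hom_objs(1)[OF u]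
      in_homD(2)[OF u] by auto
  have "Cmp C p' g = Cmp C u (Idt C S0)"
    using g(2) comp_id_right[OF u] by simp
  moreover have "Idt C S0 \<in> hom C S0 (Dom C u)"
    using id_in_hom in_hom_objs(1)[OF u] in_homD(2)[OF u] by simp
  ultimately obtain s where "s \<in> hom C S0 P" "Cmp C p'' s = Idt C S0"
    using pullback_lift[OF pb _ g'] by blast
  then show "\<exists>D i' b' p' P p'' a' i''.
           is_pushout C i m D i' b' \<and>
           p' \<in> hom C D (Cod C u) \<and> Cmp C p' i' = Zer C (Cod C m) (Cod C u) \<and> Cmp C p' b' = p \<and>
           is_pullback C p' u P p'' a' \<and>
           i'' \<in> hom C (Cod C m) P \<and> Cmp C p'' i'' = Zer C (Cod C m) (Dom C u) \<and> Cmp C a' i'' = i' \<and>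
           (\<exists>s\<in>hom C (Dom C u) P. Cmp C p'' s = Idt C (Dom C u))"
    using po p' pb i'' in_homD(2,3)[OF u] by (intro exI conjI) auto
qed

lemma Ext_zero_coproduct:
  assumes cp0: "is_coproduct C J A0 S0 \<iota>0" and cp1: "is_coproduct C J A1 S1 \<iota>1"
    and u: "u \<in> hom C S0 S1" and a: "\<forall>j\<in>J. a j \<in> hom C (A0 j) (A1 j)"
    and sq: "\<forall>j\<in>J. Cmp C u (\<iota>0 j) = Cmp C (\<iota>1 j) (a j)"
    and m: "m \<in> Arr C" and ext: "\<forall>j\<in>J. Ext_zero C E (a j) m"
  shows "Ext_zero C E u m"
proof (rule Ext_zero_if_lift[OF u m])
  fix i p D i' b' p'
  assume ip: "(i, p) \<in> E" "Dom C i = Dom C m" "Cod C p = S1"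
    and po: "is_pushout C i m D i' b'" and p': "p' \<in> hom C D S1"
    "Cmp C p' i' = Zer C (Cod C m) S1" "Cmp C p' b' = p"
  have "\<exists>e\<in>hom C (A0 j) D. Cmp C p' e = Cmp C u (\<iota>0 j)" if j: "j \<in> J" for j
  proof -
    have "\<iota>1 j \<in> hom C (A1 j) (Cod C p)"
      using cp1 j ip(3) unfolding is_coproduct_def by auto
    then show ?thesis
      using Ext_zero_lift_pushout[OF _ _ m ip(1,2) po _ _ p'(3)] ext a sq p' ip(3) j by metis
  qed
  then show "\<exists>g\<in>hom C S0 D. Cmp C p' g = u"
    using coproduct_lift[OF cp0 p'(1) u] by blast
qed

end

theorem lemma5p4:
  fixes C :: "('o, 'm) cat" and E :: "('m \<times> 'm) set" and I :: "'m set"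
    and J :: "'j set" and A0 A1 :: "'j \<Rightarrow> 'o" and a :: "'j \<Rightarrow> 'm"
    and S0 S1 :: 'o and \<iota>0 \<iota>1 :: "'j \<Rightarrow> 'm" and u :: 'm
  assumes "exact_category C E"
    and "has_exact_coproducts C E TYPE('j)"
    and "left_closed_ideal C E I"
    and "\<forall>j\<in>J. a j \<in> hom C (A0 j) (A1 j) \<and> a j \<in> I"
    and "is_coproduct C J A0 S0 \<iota>0"
    and "is_coproduct C J A1 S1 \<iota>1"
    and "u \<in> hom C S0 S1"
    and "\<forall>j\<in>J. Cmp C u (\<iota>0 j) = Cmp C (\<iota>1 j) (a j)"
  shows "u \<in> I"
proof -
  have "category C" "preadditive C" "exact_structure C E"
    using assms(1) unfolding exact_category_def additive_def by auto
  then interpret exact_cat C E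
    by (intro exact_cat.intro preadditive_category.intro exact_cat_axioms.intro)
  obtain M where M: "M \<subseteq> Arr C" "I = left_perp C E M"
    using assms(3) unfolding left_closed_ideal_def by blast
  have "Ext_zero C E u m" if "m \<in> M" for m
    using Ext_zero_coproduct[OF assms(5-7) _ assms(8)] assms(4) M that
    unfolding left_perp_def by blast
  then show ?thesis
    using M in_homD(1)[OF assms(7)] unfolding left_perp_def by blast
qed

end
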